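(* Let $\{\Psi_j\}_{j\in\mathbb{N}}$ be a sequence of measure-preserving bijections $\Psi_j:\mathbb{T}^d\to\mathbb{T}^d$. Suppose $\{\Psi_{j_k}\}_{k\in\mathbb{N}}$ is a subsequence and $\{\nu^x\}_{x\in\mathbb{T}^d}$ is a family of probability measures on $\mathbb{T}^d$ (with $\nu^x(\mathbb{T}^d)=1$ for a.e. $x$) such that \[\rho\circ\Psi_{j_k}\rightharpoonup\langle\nu^x,\rho\rangle\quad\text{weakly in }L^2(\mathbb{T}^d)\] for every $\rho\in C(\mathbb{T}^d)$. Then the same weak convergence $\rho\circ\Psi_{j_k}\rightharpoonup\langle\nu^x,\rho\rangle$ in $L^2(\mathbb{T}^d)$ holds for every $\rho\in L^\infty(\mathbb{T}^d)$.
   Context: $\mathbb{T}^d$ is the $d$-dimensional torus ($d\ge2$) with Lebesgue measure $\mu$; a measure-preserving bijection is a bijection $\Psi$ with $\mu(\Psi^{-1}(D))=\mu(D)$ for all Lebesgue measurable $D$ (equivalently $\mu(\Psi(D))=\mu(D)$). The notation $\langle\nu^x,\rho\rangle$ denotes the function $x\mapsto\int_{\mathbb{T}^d}\rho(y)\,d\nu^x(y)$. (Such a subsequence and family always exist by Ball's fundamental theorem of Young measures.) *)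

theory Defs
  imports "HOL-Probability.Probability"
begin

text \<open>The torus T^d is modelled by its fundamental domain, the half-open unit cube
  [0,1)^d in real^'d, with Lebesgue measure restricted to it.\<close>

definition torus :: "(real ^ 'd) set" where
  "torus = {x. \<forall>i. 0 \<le> x $ i \<and> x $ i < 1}"

abbreviation torus_measure :: "(real ^ 'd) measure" where
  "torus_measure \<equiv> lebesgue_on torus"

definition torus_continuous :: "(real ^ 'd \<Rightarrow> real) \<Rightarrow> bool" where
  "torus_continuous \<rho> \<longleftrightarrow>
     (\<exists>f. continuous_on UNIV f \<and> (\<forall>x i. f (x + axis i 1) = f x) \<and> (\<forall>x\<in>torus. \<rho> x = f x))"

definition measure_preserving_bij :: "(real ^ 'd \<Rightarrow> real ^ 'd) \<Rightarrow> bool" where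
  "measure_preserving_bij \<Psi> \<longleftrightarrow>
     bij_betw \<Psi> torus torus \<and>
     (\<forall>D \<in> sets (torus_measure :: (real ^ 'd) measure).
        \<Psi> -` D \<inter> torus \<in> sets torus_measure \<and>
        measure torus_measure (\<Psi> -` D \<inter> torus) = measure torus_measure D)"

definition L2_torus :: "(real ^ 'd \<Rightarrow> real) \<Rightarrow> bool" where
  "L2_torus g \<longleftrightarrow> g \<in> borel_measurable (torus_measure :: (real ^ 'd) measure)
                   \<and> integrable torus_measure (\<lambda>x. (g x)^2)"

definition weak_L2_conv :: "(nat \<Rightarrow> real ^ 'd \<Rightarrow> real) \<Rightarrow> (real ^ 'd \<Rightarrow> real) \<Rightarrow> bool" where
  "weak_L2_conv f l \<longleftrightarrow>
     (\<forall>k. L2_torus (f k)) \<and> L2_torus l \<and>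
     (\<forall>g. L2_torus g \<longrightarrow>
        (\<lambda>k. \<integral>x. f k x * g x \<partial>torus_measure) \<longlonglongrightarrow> (\<integral>x. l x * g x \<partial>torus_measure))"

definition young_pair :: "(real ^ 'd \<Rightarrow> (real ^ 'd) measure) \<Rightarrow> (real ^ 'd \<Rightarrow> real) \<Rightarrow> real ^ 'd \<Rightarrow> real" where
  "young_pair \<nu> \<rho> x = (\<integral>y. \<rho> y \<partial>(\<nu> x))"

end

theory Submission
  imports Defs
begin

(*
  Call rho Young-convergent if rho o Psi_(j_k) converges weakly in L^2 to <nu, rho>. These
  functions include the continuous periodic ones, form a vector space, and are closed under
  uniformly bounded pointwise convergence on the torus. For the last point, measure preservation gives
  ||(rho_n - rho) o Psi||_2 = ||rho_n - rho||_2 for every Psi, so rho_n o Psi_(j_k) tends to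
  rho o Psi_(j_k) in L^2 uniformly in k, while <nu^x, rho_n> tends to <nu^x, rho> by dominated
  convergence for each probability measure nu^x; hence the two limits can be exchanged.
  Indicators of sets {phi > 0} with phi continuous and periodic are increasing limits of
  min 1 (n * max 0 phi). These sets are closed under intersection and generate the Borel sets
  of the torus, because a coordinate x_i is a Borel function of cos (2 pi x_i) and
  sin (2 pi x_i). Dynkin's pi-lambda theorem then gives all Borel indicators, and monotone
  approximation by simple functions all bounded Borel functions.
*)

lemma abs_mult_le_AM_GM:
  fixes a b t :: real
  assumes "t > 0"
  shows "\<bar>a * b\<bar> \<le> t * a\<^sup>2 + b\<^sup>2 / (4 * t)"
proof -
  have "4 * t * \<bar>a * b\<bar> = 2 * (2 * t * \<bar>a\<bar>) * \<bar>b\<bar>"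
    by (simp add: abs_mult)
  also have "\<dots> \<le> (2 * t * \<bar>a\<bar>)\<^sup>2 + \<bar>b\<bar>\<^sup>2"
    by (rule sum_squares_bound)
  also have "\<dots> = 4 * t * (t * a\<^sup>2 + b\<^sup>2 / (4 * t))"
    using assms by (simp add: power2_eq_square field_simps)
  finally show ?thesis using assms by simp
qed

lemma
  fixes f g :: "'a \<Rightarrow> real"
  assumes f: "f \<in> borel_measurable M" "integrable M (\<lambda>x. (f x)\<^sup>2)"
    and g: "g \<in> borel_measurable M" "integrable M (\<lambda>x. (g x)\<^sup>2)"
  shows integrable_mult_square_integrable: "integrable M (\<lambda>x. f x * g x)"
    and abs_integral_mult_le_AM_GM: "t > 0 \<Longrightarrow>
      \<bar>\<integral>x. f x * g x \<partial>M\<bar> \<le> t * (\<integral>x. (f x)\<^sup>2 \<partial>M) + (\<integral>x. (g x)\<^sup>2 \<partial>M) / (4 * t)"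
proof -
  have dominated: "integrable M (\<lambda>x. t * (f x)\<^sup>2 + (g x)\<^sup>2 / (4 * t))" for t
    using f g by simp
  show fg: "integrable M (\<lambda>x. f x * g x)"
    by (rule Bochner_Integration.integrable_bound[OF dominated[of 1]])
      (use f g abs_mult_le_AM_GM[of 1] in auto)
  assume "t > 0"
  have "\<bar>\<integral>x. f x * g x \<partial>M\<bar> \<le> (\<integral>x. \<bar>f x * g x\<bar> \<partial>M)"
    by (rule integral_abs_bound)
  also have "\<dots> \<le> (\<integral>x. t * (f x)\<^sup>2 + (g x)\<^sup>2 / (4 * t) \<partial>M)"
    using \<open>t > 0\<close> by (intro integral_mono integrable_abs fg dominated abs_mult_le_AM_GM)
  also have "\<dots> = t * (\<integral>x. (f x)\<^sup>2 \<partial>M) + (\<integral>x. (g x)\<^sup>2 \<partial>M) / (4 * t)"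
    using f g by simp
  finally show "\<bar>\<integral>x. f x * g x \<partial>M\<bar> \<le> t * (\<integral>x. (f x)\<^sup>2 \<partial>M) + (\<integral>x. (g x)\<^sup>2 \<partial>M) / (4 * t)" .
qed

lemma uniform_limit_of_tradeoff_bound:
  fixes f :: "nat \<Rightarrow> 'a \<Rightarrow> real"
  assumes H: "H \<longlonglongrightarrow> 0" and c: "c \<ge> 0"
    and bound: "\<And>t n x. t > 0 \<Longrightarrow> x \<in> S \<Longrightarrow> \<bar>f n x - l x\<bar> \<le> t * H n + c / t"
  shows "uniform_limit S f l sequentially"
  unfolding uniform_limit_sequentially_iff
proof (intro allI impI)
  fix e :: real assume e: "e > 0"
  define t where "t = 2 * (c + 1) / e"
  have t: "t > 0" and ct: "c / t < e / 2"
    using c e by (simp_all add: t_def field_simps)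
  obtain N where N: "\<forall>n\<ge>N. \<bar>H n\<bar> < e / (2 * t)"
    using LIMSEQ_D[OF H, of "e / (2 * t)"] e t by auto
  have "dist (f n x) (l x) < e" if "n \<ge> N" "x \<in> S" for n x
  proof -
    have "H n < e / (2 * t)" using N that by fastforce
    then have "t * H n < e / 2" using t by (simp add: field_simps)
    then have "\<bar>f n x - l x\<bar> < e" using bound[OF t that(2), of n] ct by linarith
    then show ?thesis by (simp add: dist_real_def)
  qed
  then show "\<exists>N. \<forall>n\<ge>N. \<forall>x\<in>S. dist (f n x) (l x) < e" by blast
qed

lemma measurable_lebesgue_on_if_borel_on:
  assumes "f \<in> restrict_space borel S \<rightarrow>\<^sub>M N"
  shows "f \<in> lebesgue_on S \<rightarrow>\<^sub>M N"
proof -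
  have "(\<lambda>x. x) \<in> lebesgue_on S \<rightarrow>\<^sub>M restrict_space borel S"
    by (intro measurable_restrict_space3 measurable_completion) auto
  from measurable_compose[OF this assms] show ?thesis .
qed

lemma borel_measurable_lebesgue_on_AE:
  fixes f g :: "'a::euclidean_space \<Rightarrow> 'b::euclidean_space"
  assumes S: "S \<in> sets lebesgue" and f: "f \<in> borel_measurable (lebesgue_on S)"
    and ae: "AE x in lebesgue_on S. f x = g x"
  shows "g \<in> borel_measurable (lebesgue_on S)"
proof -
  have S': "S \<inter> space lebesgue \<in> sets lebesgue" using S by simp
  have "(\<lambda>x. indicator S x *\<^sub>R f x) \<in> borel_measurable lebesgue"
    using f borel_measurable_restrict_space_iff[OF S'] by blast
  moreover have "AE x in lebesgue. indicator S x *\<^sub>R f x = indicator S x *\<^sub>R g x"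
    using ae unfolding AE_restrict_space_iff[OF S'] by eventually_elim (auto simp: indicator_def)
  ultimately have "(\<lambda>x. indicator S x *\<^sub>R g x) \<in> borel_measurable lebesgue"
    by (rule borel_measurable_AE)
  then show ?thesis using borel_measurable_restrict_space_iff[OF S'] by blast
qed

section \<open>Square-integrable functions on the torus\<close>

lemma torus_subset_cbox: "torus \<subseteq> cbox 0 (1 :: real ^ 'd)"
  unfolding torus_def by (auto simp: mem_box_cart less_imp_le)

lemma torus_in_borel [measurable]: "(torus :: (real ^ 'd) set) \<in> sets borel"
  unfolding torus_def by measurable

lemma torus_in_lebesgue [measurable]: "(torus :: (real ^ 'd) set) \<in> sets lebesgue"
  by simp

lemma finite_measure_torus: "finite_measure (torus_measure :: (real ^ 'd) measure)"
  using bounded_subset[OF bounded_cbox torus_subset_cbox]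
  by (intro finite_measure_lebesgue_on bounded_set_imp_lmeasurable) auto

lemma L2_torus_bounded:
  assumes "f \<in> borel_measurable torus_measure" "AE x in torus_measure. \<bar>f x\<bar> \<le> B"
  shows "L2_torus f"
  unfolding L2_torus_def
proof
  have "AE x in torus_measure. norm ((f x)\<^sup>2) \<le> B\<^sup>2"
    using assms(2)
    by eventually_elim (auto intro: order_trans[OF abs_ge_zero] simp: power2_le_iff_abs_le)
  then show "integrable torus_measure (\<lambda>x. (f x)\<^sup>2)"
    using assms(1) by (intro finite_measure.integrable_const_bound[OF finite_measure_torus]) auto
qed fact

lemma integrable_mult_L2_torus:
  "L2_torus f \<Longrightarrow> L2_torus g \<Longrightarrow> integrable torus_measure (\<lambda>x. f x * g x)"
  unfolding L2_torus_def by (blast intro: integrable_mult_square_integrable)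

lemma L2_torus_const: "L2_torus (\<lambda>x. c)"
  by (rule L2_torus_bounded[where B="\<bar>c\<bar>"]) auto

lemma integral_lincomb_mult_L2_torus:
  assumes "L2_torus f1" "L2_torus f2" "L2_torus g"
  shows "(\<integral>x. (a * f1 x + b * f2 x) * g x \<partial>torus_measure)
    = a * (\<integral>x. f1 x * g x \<partial>torus_measure) + b * (\<integral>x. f2 x * g x \<partial>torus_measure)"
  using integrable_mult_L2_torus[OF assms(1,3)] integrable_mult_L2_torus[OF assms(2,3)]
  by (simp add: algebra_simps)

section \<open>Measure-preserving bijections of the torus\<close>

context
  fixes \<Psi> :: "real ^ 'd \<Rightarrow> real ^ 'd"
  assumes \<Psi>: "measure_preserving_bij \<Psi>"
begin

lemma measure_preserving_bij_torus: "x \<in> torus \<Longrightarrow> \<Psi> x \<in> torus"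
  using \<Psi> unfolding measure_preserving_bij_def bij_betw_def by auto

lemma measure_preserving_bij_measurable: "\<Psi> \<in> torus_measure \<rightarrow>\<^sub>M torus_measure"
  using \<Psi> measure_preserving_bij_torus unfolding measure_preserving_bij_def
  by (intro measurableI) auto

lemma distr_measure_preserving_bij: "distr torus_measure torus_measure \<Psi> = torus_measure"
proof (rule measure_eqI)
  fix A assume "A \<in> sets (distr torus_measure torus_measure \<Psi>)"
  then have A: "A \<in> sets torus_measure" by simp
  have "measure torus_measure (\<Psi> -` A \<inter> torus) = measure torus_measure A"
    using \<Psi> A unfolding measure_preserving_bij_def by blast
  then show "emeasure (distr torus_measure torus_measure \<Psi>) A = emeasure torus_measure A"
    using A measure_preserving_bij_measurable
    by (simp add: emeasure_distr finite_measure.emeasure_eq_measure[OF finite_measure_torus])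
qed simp

lemma
  fixes f :: "real ^ 'd \<Rightarrow> real"
  assumes f: "f \<in> borel_measurable torus_measure"
  shows integrable_comp_measure_preserving_bij_iff:
      "integrable torus_measure (\<lambda>x. f (\<Psi> x)) \<longleftrightarrow> integrable torus_measure f"
    and integral_comp_measure_preserving_bij:
      "(\<integral>x. f (\<Psi> x) \<partial>torus_measure) = (\<integral>x. f x \<partial>torus_measure)"
  using integrable_distr_eq[OF measure_preserving_bij_measurable f]
    integral_distr[OF measure_preserving_bij_measurable f]
  by (simp_all add: distr_measure_preserving_bij)

lemma L2_torus_comp_measure_preserving_bij: "L2_torus f \<Longrightarrow> L2_torus (\<lambda>x. f (\<Psi> x))"
  unfolding L2_torus_def
  using integrable_comp_measure_preserving_bij_iff[of "\<lambda>x. (f x)\<^sup>2"]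
    measurable_compose[OF measure_preserving_bij_measurable]
  by auto

lemma abs_integral_comp_mult_le:
  assumes h: "L2_torus h" and g: "L2_torus g" and t: "t > 0"
  shows "\<bar>\<integral>x. h (\<Psi> x) * g x \<partial>torus_measure\<bar>
    \<le> t * (\<integral>x. (h x)\<^sup>2 \<partial>torus_measure) + (\<integral>x. (g x)\<^sup>2 \<partial>torus_measure) / (4 * t)"
proof -
  have "(\<integral>x. (h (\<Psi> x))\<^sup>2 \<partial>torus_measure) = (\<integral>x. (h x)\<^sup>2 \<partial>torus_measure)"
    using h unfolding L2_torus_def by (intro integral_comp_measure_preserving_bij) auto
  moreover have "L2_torus (\<lambda>x. h (\<Psi> x))"
    using h by (rule L2_torus_comp_measure_preserving_bij)
  ultimately show ?thesis
    using abs_integral_mult_le_AM_GM[OF _ _ _ _ t, of "\<lambda>x. h (\<Psi> x)" torus_measure g] g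
    unfolding L2_torus_def by simp
qed

end

lemma integral_square_diff_tendsto_0:
  fixes \<rho>s :: "nat \<Rightarrow> real ^ 'd \<Rightarrow> real"
  assumes meas: "\<And>n. \<rho>s n \<in> borel_measurable torus_measure" "\<rho> \<in> borel_measurable torus_measure"
    and bound: "\<And>n x. x \<in> torus \<Longrightarrow> \<bar>\<rho>s n x - \<rho> x\<bar> \<le> B"
    and lim: "\<And>x. x \<in> torus \<Longrightarrow> (\<lambda>n. \<rho>s n x) \<longlonglongrightarrow> \<rho> x"
  shows "(\<lambda>n. \<integral>x. (\<rho>s n x - \<rho> x)\<^sup>2 \<partial>torus_measure) \<longlonglongrightarrow> 0"
proof -
  have "(\<lambda>n. \<integral>x. (\<rho>s n x - \<rho> x)\<^sup>2 \<partial>torus_measure)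
      \<longlonglongrightarrow> (\<integral>x. 0 \<partial>(torus_measure :: (real ^ 'd) measure))"
  proof (rule integral_dominated_convergence[where w="\<lambda>x. B\<^sup>2"])
    have "(\<lambda>n. (\<rho>s n x - \<rho> x)\<^sup>2) \<longlonglongrightarrow> (\<rho> x - \<rho> x)\<^sup>2" if "x \<in> torus" for x
      by (intro tendsto_intros lim that)
    then show "AE x in torus_measure. (\<lambda>n. (\<rho>s n x - \<rho> x)\<^sup>2) \<longlonglongrightarrow> 0"
      by (intro AE_I2) simp
    show "AE x in torus_measure. norm ((\<rho>s n x - \<rho> x)\<^sup>2) \<le> B\<^sup>2" for n
      using power_mono[OF bound abs_ge_zero, of _ n 2] by (intro AE_I2) simp
  qed (use meas finite_measure.integrable_const[OF finite_measure_torus] in auto)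
  then show ?thesis by simp
qed

lemma uniform_limit_integral_comp_mult:
  fixes \<rho>s :: "nat \<Rightarrow> real ^ 'd \<Rightarrow> real" and \<Psi> :: "nat \<Rightarrow> real ^ 'd \<Rightarrow> real ^ 'd"
  assumes \<Psi>: "\<And>k. measure_preserving_bij (\<Psi> k)"
    and meas: "\<And>n. \<rho>s n \<in> borel_measurable torus_measure" "\<rho> \<in> borel_measurable torus_measure"
    and bound: "\<And>n x. x \<in> torus \<Longrightarrow> \<bar>\<rho>s n x\<bar> \<le> B" "\<And>x. x \<in> torus \<Longrightarrow> \<bar>\<rho> x\<bar> \<le> B"
    and lim: "\<And>x. x \<in> torus \<Longrightarrow> (\<lambda>n. \<rho>s n x) \<longlonglongrightarrow> \<rho> x"
    and g: "L2_torus g"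
  shows "uniform_limit UNIV (\<lambda>n k. \<integral>x. \<rho>s n (\<Psi> k x) * g x \<partial>torus_measure)
           (\<lambda>k. \<integral>x. \<rho> (\<Psi> k x) * g x \<partial>torus_measure) sequentially"
proof (rule uniform_limit_of_tradeoff_bound)
  have diff_bound: "\<bar>\<rho>s n x - \<rho> x\<bar> \<le> 2 * B" if "x \<in> torus" for n x
    using bound(1)[OF that, of n] bound(2)[OF that] by linarith
  then show "(\<lambda>n. \<integral>x. (\<rho>s n x - \<rho> x)\<^sup>2 \<partial>torus_measure) \<longlonglongrightarrow> 0"
    by (rule integral_square_diff_tendsto_0[OF meas _ lim])
  have L2_diff: "L2_torus (\<lambda>x. \<rho>s n x - \<rho> x)" for n
    using meas diff_bound by (intro L2_torus_bounded[where B="2 * B"] AE_I2) auto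
  have L2_comp: "L2_torus (\<lambda>x. f (\<Psi> k x))" if "f \<in> borel_measurable torus_measure"
    "\<And>x. x \<in> torus \<Longrightarrow> \<bar>f x\<bar> \<le> B" for f k
    using that
    by (intro L2_torus_comp_measure_preserving_bij[OF \<Psi>] L2_torus_bounded[where B=B] AE_I2) auto
  show "0 \<le> (\<integral>x. (g x)\<^sup>2 \<partial>torus_measure) / 4" by simp
  fix t :: real and n k assume t: "t > 0"
  (* by measure preservation, the bound does not depend on k *)
  have "(\<integral>x. \<rho>s n (\<Psi> k x) * g x \<partial>torus_measure) - (\<integral>x. \<rho> (\<Psi> k x) * g x \<partial>torus_measure)
      = (\<integral>x. (\<rho>s n (\<Psi> k x) - \<rho> (\<Psi> k x)) * g x \<partial>torus_measure)"
    using integrable_mult_L2_torus[OF L2_comp g] meas bound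
    by (simp add: left_diff_distrib)
  also have "\<bar>\<dots>\<bar> \<le> t * (\<integral>x. (\<rho>s n x - \<rho> x)\<^sup>2 \<partial>torus_measure) + (\<integral>x. (g x)\<^sup>2 \<partial>torus_measure) / 4 / t"
    using abs_integral_comp_mult_le[OF \<Psi> L2_diff g t] by simp
  finally show "\<bar>(\<integral>x. \<rho>s n (\<Psi> k x) * g x \<partial>torus_measure) - (\<integral>x. \<rho> (\<Psi> k x) * g x \<partial>torus_measure)\<bar>
      \<le> t * (\<integral>x. (\<rho>s n x - \<rho> x)\<^sup>2 \<partial>torus_measure) + (\<integral>x. (g x)\<^sup>2 \<partial>torus_measure) / 4 / t" .
qed

section \<open>Young measures\<close>

locale young_family =
  fixes \<nu> :: "real ^ 'd \<Rightarrow> (real ^ 'd) measure"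
  assumes sets_young: "\<And>x. x \<in> torus \<Longrightarrow> sets (\<nu> x) = sets (restrict_space borel torus)"
    and AE_prob_space_young: "AE x in torus_measure. prob_space (\<nu> x)"
begin

lemma space_young: "x \<in> torus \<Longrightarrow> space (\<nu> x) = torus"
  using sets_eq_imp_space_eq[OF sets_young] by (simp add: space_restrict_space)

lemma measurable_young: "x \<in> torus \<Longrightarrow> f \<in> restrict_space borel torus \<rightarrow>\<^sub>M N \<Longrightarrow> f \<in> \<nu> x \<rightarrow>\<^sub>M N"
  using measurable_cong_sets[OF sets_young refl] by blast

lemma AE_prob_young:
  assumes "\<And>x. x \<in> torus \<Longrightarrow> prob_space (\<nu> x) \<Longrightarrow> P x"
  shows "AE x in torus_measure. P x"
  using AE_prob_space_young by (rule lebesgue_on_mono) (rule assms)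

context
  fixes x assumes x: "x \<in> torus" and prob: "prob_space (\<nu> x)"
begin

interpretation prob_space "\<nu> x" by (rule prob)

lemma integrable_young:
  fixes \<rho> :: "real ^ 'd \<Rightarrow> real"
  assumes "\<rho> \<in> borel_measurable (restrict_space borel torus)" "\<And>y. y \<in> torus \<Longrightarrow> \<bar>\<rho> y\<bar> \<le> B"
  shows "integrable (\<nu> x) \<rho>"
  using assms by (intro integrable_const_bound[where B=B] AE_I2 measurable_young[OF x])
    (auto simp: space_young[OF x])

lemma abs_young_pair_le:
  fixes \<rho> :: "real ^ 'd \<Rightarrow> real"
  assumes "\<rho> \<in> borel_measurable (restrict_space borel torus)" "\<And>y. y \<in> torus \<Longrightarrow> \<bar>\<rho> y\<bar> \<le> B"
  shows "\<bar>young_pair \<nu> \<rho> x\<bar> \<le> B"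
proof -
  have "\<bar>young_pair \<nu> \<rho> x\<bar> \<le> (\<integral>y. \<bar>\<rho> y\<bar> \<partial>\<nu> x)"
    unfolding young_pair_def by (rule integral_abs_bound)
  also have "\<dots> \<le> (\<integral>y. B \<partial>\<nu> x)"
    using assms
    by (intro integral_mono integrable_abs integrable_young) (auto simp: space_young[OF x])
  finally show ?thesis by (simp add: prob_space)
qed

lemma young_pair_lincomb:
  fixes \<rho>1 \<rho>2 :: "real ^ 'd \<Rightarrow> real"
  assumes "\<rho>1 \<in> borel_measurable (restrict_space borel torus)" "\<And>y. y \<in> torus \<Longrightarrow> \<bar>\<rho>1 y\<bar> \<le> B1"
    and "\<rho>2 \<in> borel_measurable (restrict_space borel torus)" "\<And>y. y \<in> torus \<Longrightarrow> \<bar>\<rho>2 y\<bar> \<le> B2"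
  shows "young_pair \<nu> (\<lambda>y. a * \<rho>1 y + b * \<rho>2 y) x = a * young_pair \<nu> \<rho>1 x + b * young_pair \<nu> \<rho>2 x"
  using integrable_young[OF assms(1,2)] integrable_young[OF assms(3,4)]
  by (simp add: young_pair_def)

lemma young_pair_tendsto:
  fixes \<rho>s :: "nat \<Rightarrow> real ^ 'd \<Rightarrow> real"
  assumes meas: "\<And>n. \<rho>s n \<in> borel_measurable (restrict_space borel torus)"
    "\<rho> \<in> borel_measurable (restrict_space borel torus)"
    and bound: "\<And>n y. y \<in> torus \<Longrightarrow> \<bar>\<rho>s n y\<bar> \<le> B"
    and lim: "\<And>y. y \<in> torus \<Longrightarrow> (\<lambda>n. \<rho>s n y) \<longlonglongrightarrow> \<rho> y"
  shows "(\<lambda>n. young_pair \<nu> (\<rho>s n) x) \<longlonglongrightarrow> young_pair \<nu> \<rho> x"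
  unfolding young_pair_def
  using meas bound lim
  by (intro integral_dominated_convergence[where w="\<lambda>_. B"] AE_I2 measurable_young[OF x])
    (auto simp: space_young[OF x])

end

lemma
  fixes \<rho>1 \<rho>2 :: "real ^ 'd \<Rightarrow> real"
  assumes "\<rho>1 \<in> borel_measurable (restrict_space borel torus)" "\<And>y. y \<in> torus \<Longrightarrow> \<bar>\<rho>1 y\<bar> \<le> B1"
    and "\<rho>2 \<in> borel_measurable (restrict_space borel torus)" "\<And>y. y \<in> torus \<Longrightarrow> \<bar>\<rho>2 y\<bar> \<le> B2"
  shows AE_young_pair_lincomb: "AE x in torus_measure.
      a * young_pair \<nu> \<rho>1 x + b * young_pair \<nu> \<rho>2 x = young_pair \<nu> (\<lambda>y. a * \<rho>1 y + b * \<rho>2 y) x"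
    and borel_measurable_young_pair_lincomb:
      "young_pair \<nu> \<rho>1 \<in> borel_measurable torus_measure \<Longrightarrow>
       young_pair \<nu> \<rho>2 \<in> borel_measurable torus_measure \<Longrightarrow>
       young_pair \<nu> (\<lambda>y. a * \<rho>1 y + b * \<rho>2 y) \<in> borel_measurable torus_measure"
proof -
  show ae: "AE x in torus_measure.
      a * young_pair \<nu> \<rho>1 x + b * young_pair \<nu> \<rho>2 x = young_pair \<nu> (\<lambda>y. a * \<rho>1 y + b * \<rho>2 y) x"
    by (rule AE_prob_young) (simp add: young_pair_lincomb[OF _ _ assms])
  assume "young_pair \<nu> \<rho>1 \<in> borel_measurable torus_measure"
    "young_pair \<nu> \<rho>2 \<in> borel_measurable torus_measure"
  then have "(\<lambda>x. a * young_pair \<nu> \<rho>1 x + b * young_pair \<nu> \<rho>2 x) \<in> borel_measurable torus_measure"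
    by measurable
  then show "young_pair \<nu> (\<lambda>y. a * \<rho>1 y + b * \<rho>2 y) \<in> borel_measurable torus_measure"
    by (rule borel_measurable_lebesgue_on_AE[OF torus_in_lebesgue _ ae])
qed

lemma young_pair_cong:
  "x \<in> torus \<Longrightarrow> (\<And>y. y \<in> torus \<Longrightarrow> \<rho> y = \<rho>' y) \<Longrightarrow> young_pair \<nu> \<rho> x = young_pair \<nu> \<rho>' x"
  unfolding young_pair_def by (intro Bochner_Integration.integral_cong) (auto simp: space_young)

context
  fixes \<rho>s :: "nat \<Rightarrow> real ^ 'd \<Rightarrow> real" and \<rho> :: "real ^ 'd \<Rightarrow> real" and B :: real
  assumes meas: "\<And>n. \<rho>s n \<in> borel_measurable (restrict_space borel torus)"
    "\<rho> \<in> borel_measurable (restrict_space borel torus)"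
    and bound: "\<And>n y. y \<in> torus \<Longrightarrow> \<bar>\<rho>s n y\<bar> \<le> B"
    and lim: "\<And>y. y \<in> torus \<Longrightarrow> (\<lambda>n. \<rho>s n y) \<longlonglongrightarrow> \<rho> y"
    and meas_pair: "\<And>n. young_pair \<nu> (\<rho>s n) \<in> borel_measurable torus_measure"
begin

lemma AE_young_pair_tendsto:
  "AE x in torus_measure. (\<lambda>n. young_pair \<nu> (\<rho>s n) x) \<longlonglongrightarrow> young_pair \<nu> \<rho> x"
  by (rule AE_prob_young) (rule young_pair_tendsto[OF _ _ meas bound lim])

lemma borel_measurable_young_pair_limit: "young_pair \<nu> \<rho> \<in> borel_measurable torus_measure"
  using borel_measurable_lim_metric[OF meas_pair]
  by (rule borel_measurable_lebesgue_on_AE[OF torus_in_lebesgue])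
    (use AE_young_pair_tendsto in \<open>auto elim!: AE_mp intro: limI\<close>)

lemma integral_young_pair_mult_tendsto:
  assumes g: "L2_torus g"
  shows "(\<lambda>n. \<integral>x. young_pair \<nu> (\<rho>s n) x * g x \<partial>torus_measure)
    \<longlonglongrightarrow> (\<integral>x. young_pair \<nu> \<rho> x * g x \<partial>torus_measure)"
proof (rule integral_dominated_convergence[where w="\<lambda>x. B * \<bar>g x\<bar>"])
  show "AE x in torus_measure. (\<lambda>n. young_pair \<nu> (\<rho>s n) x * g x) \<longlonglongrightarrow> young_pair \<nu> \<rho> x * g x"
    using AE_young_pair_tendsto by eventually_elim (rule tendsto_mult_right)
  show "AE x in torus_measure. norm (young_pair \<nu> (\<rho>s n) x * g x) \<le> B * \<bar>g x\<bar>" for n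
    using abs_young_pair_le[OF _ _ meas(1) bound]
    by (intro AE_prob_young) (simp add: abs_mult mult_right_mono)
  show "integrable torus_measure (\<lambda>x. B * \<bar>g x\<bar>)"
    using integrable_mult_L2_torus[OF L2_torus_const[of 1] g]
    by (intro integrable_mult_right integrable_abs) simp
qed (use borel_measurable_young_pair_limit meas_pair g in \<open>auto simp: L2_torus_def\<close>)

end

end

section \<open>Periodic continuous functions generate the Borel sets of the torus\<close>

definition periodic_continuous :: "(real ^ 'd \<Rightarrow> real) \<Rightarrow> bool" where
  "periodic_continuous \<phi> \<longleftrightarrow> continuous_on UNIV \<phi> \<and> (\<forall>x i. \<phi> (x + axis i 1) = \<phi> x)"

lemma torus_continuous_if_periodic_continuous: "periodic_continuous \<phi> \<Longrightarrow> torus_continuous \<phi>"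
  unfolding periodic_continuous_def torus_continuous_def by blast

lemma bounded_on_torus_if_periodic_continuous:
  assumes "periodic_continuous \<phi>"
  obtains B where "\<And>x. x \<in> torus \<Longrightarrow> \<bar>\<phi> x\<bar> \<le> B"
proof -
  have "continuous_on (cbox 0 1) \<phi>"
    using assms continuous_on_subset unfolding periodic_continuous_def by blast
  then have "bounded (\<phi> ` cbox 0 1)"
    by (intro compact_imp_bounded compact_continuous_image compact_cbox)
  then obtain B where "\<forall>y\<in>\<phi> ` cbox 0 1. \<bar>y\<bar> \<le> B"
    unfolding bounded_real by blast
  then show ?thesis using that torus_subset_cbox by blast
qed

lemma borel_measurable_if_periodic_continuous:
  "periodic_continuous \<phi> \<Longrightarrow> \<phi> \<in> borel_measurable borel"
  unfolding periodic_continuous_def by (blast intro: borel_measurable_continuous_onI)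

lemma periodic_continuous_compose:
  "continuous_on UNIV h \<Longrightarrow> periodic_continuous \<phi> \<Longrightarrow> periodic_continuous (\<lambda>x. h (\<phi> x))"
  unfolding periodic_continuous_def by (auto intro: continuous_on_compose2)

lemma periodic_continuous_min:
  "periodic_continuous \<phi> \<Longrightarrow> periodic_continuous \<psi> \<Longrightarrow> periodic_continuous (\<lambda>x. min (\<phi> x) (\<psi> x))"
  unfolding periodic_continuous_def by (auto intro: continuous_on_min)

lemma periodic_continuous_coordinate:
  assumes "continuous_on UNIV h" "\<And>t. h (t + 1) = h t"
  shows "periodic_continuous (\<lambda>x :: real ^ 'd. h (x $ i))"
  unfolding periodic_continuous_def
proof
  show "continuous_on UNIV (\<lambda>x :: real ^ 'd. h (x $ i))"
    by (rule continuous_on_compose2[OF assms(1)]) (auto intro: continuous_intros)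
  show "\<forall>x k. h ((x + axis k 1) $ i) = h (x $ i)"
    by (auto simp: axis_def assms(2))
qed

lemma unit_interval_eq_angle:
  fixes t :: real
  assumes "0 \<le> t" "t < 1"
  shows "t = (if 0 \<le> sin (2 * pi * t) then arccos (cos (2 * pi * t)) / (2 * pi)
              else 1 - arccos (cos (2 * pi * t)) / (2 * pi))"
proof (cases "t \<le> 1/2")
  case True
  then have "0 \<le> 2 * pi * t" "2 * pi * t \<le> pi" using assms by auto
  then show ?thesis using sin_ge_zero arccos_cos by auto
next
  case False
  then have angle: "pi < 2 * pi * t" "2 * pi * t < 2 * pi" using assms by auto
  then have "sin (2 * pi * t) < 0" by (rule sin_lt_zero)
  moreover have "cos (2 * pi * t) = cos (2 * pi - 2 * pi * t)" by (simp add: cos_diff)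
  moreover have "arccos (cos (2 * pi - 2 * pi * t)) = 2 * pi - 2 * pi * t"
    using angle by (intro arccos_cos) auto
  ultimately show ?thesis by (auto simp: field_simps)
qed

definition torus_gen :: "(real ^ 'd) set set" where
  "torus_gen = {{x \<in> torus. 0 < \<phi> x} | \<phi>. periodic_continuous \<phi>}"

lemma torus_gen_subset_Pow: "torus_gen \<subseteq> Pow (torus :: (real ^ 'd) set)"
  unfolding torus_gen_def by auto

lemma Int_stable_torus_gen: "Int_stable (torus_gen :: (real ^ 'd) set set)"
proof (rule Int_stableI)
  fix A B :: "(real ^ 'd) set" assume "A \<in> torus_gen" "B \<in> torus_gen"
  then obtain \<phi> \<psi> where "periodic_continuous \<phi>" "A = {x \<in> torus. 0 < \<phi> x}"
    and "periodic_continuous \<psi>" "B = {x \<in> torus. 0 < \<psi> x}"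
    unfolding torus_gen_def by blast
  then show "A \<inter> B \<in> torus_gen"
    unfolding torus_gen_def
    by (intro CollectI exI[of _ "\<lambda>x. min (\<phi> x) (\<psi> x)"]) (auto intro: periodic_continuous_min)
qed

lemma borel_measurable_sigma_torus_gen:
  assumes "periodic_continuous \<phi>"
  shows "\<phi> \<in> borel_measurable (sigma torus torus_gen)"
  unfolding borel_measurable_iff_greater
proof
  fix a
  have "periodic_continuous (\<lambda>x. \<phi> x - a)"
    by (rule periodic_continuous_compose[OF _ assms]) (intro continuous_intros)
  then have "{x \<in> torus. 0 < \<phi> x - a} \<in> torus_gen"
    unfolding torus_gen_def by (intro CollectI exI[of _ "\<lambda>x. \<phi> x - a"]) simp
  moreover have "{x \<in> torus. 0 < \<phi> x - a} = {x \<in> space (sigma torus torus_gen). a < \<phi> x}"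
    by (simp add: space_measure_of[OF torus_gen_subset_Pow])
  ultimately show "{x \<in> space (sigma torus torus_gen). a < \<phi> x} \<in> sets (sigma torus torus_gen)"
    by (simp add: sets_measure_of[OF torus_gen_subset_Pow] sigma_sets.Basic)
qed

lemma coordinate_measurable_sigma_torus_gen:
  "(\<lambda>x :: real ^ 'd. x $ i) \<in> borel_measurable (sigma torus torus_gen)"
proof -
  have periodic_sin: "periodic_continuous (\<lambda>x :: real ^ 'd. sin (2 * pi * x $ i))"
    by (rule periodic_continuous_coordinate) (auto intro: continuous_intros simp: distrib_left)
  have "continuous_on UNIV (\<lambda>t. arccos (cos (2 * pi * t)))"
    by (rule continuous_on_compose2[OF continuous_on_arccos']) (auto intro: continuous_intros)
  then have periodic_arccos: "periodic_continuous (\<lambda>x :: real ^ 'd. arccos (cos (2 * pi * x $ i)))"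
    by (rule periodic_continuous_coordinate) (simp add: distrib_left)
  have "(\<lambda>x. if 0 \<le> sin (2 * pi * x $ i) then arccos (cos (2 * pi * x $ i)) / (2 * pi)
         else 1 - arccos (cos (2 * pi * x $ i)) / (2 * pi))
      \<in> borel_measurable (sigma torus torus_gen)"
    using borel_measurable_sigma_torus_gen[OF periodic_sin]
      borel_measurable_sigma_torus_gen[OF periodic_arccos]
    by (intro measurable_If borel_measurable_divide borel_measurable_diff borel_measurable_const)
      (auto simp: borel_measurable_iff_ge)
  moreover have "x $ i = (if 0 \<le> sin (2 * pi * x $ i) then arccos (cos (2 * pi * x $ i)) / (2 * pi)
         else 1 - arccos (cos (2 * pi * x $ i)) / (2 * pi))" if "x \<in> torus" for x :: "real ^ 'd"
    using that unfolding torus_def by (intro unit_interval_eq_angle) auto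
  ultimately show ?thesis
    by (subst measurable_cong) (auto simp: space_measure_of[OF torus_gen_subset_Pow])
qed

lemma sets_restrict_space_borel_torus:
  "sets (restrict_space borel torus) = sigma_sets torus (torus_gen :: (real ^ 'd) set set)"
proof
  have "(\<lambda>x. x) \<in> borel_measurable (sigma torus (torus_gen :: (real ^ 'd) set set))"
  proof (rule borel_measurable_euclidean_space[THEN iffD2, rule_format])
    fix b :: "real ^ 'd" assume "b \<in> Basis"
    then obtain i where "b = axis i 1" unfolding Basis_vec_def by auto
    then show "(\<lambda>x. x \<bullet> b) \<in> borel_measurable (sigma torus torus_gen)"
      using coordinate_measurable_sigma_torus_gen[of i] by (simp add: cart_eq_inner_axis)
  qed
  from measurable_sets[OF this]
  show "sets (restrict_space borel torus) \<subseteq> sigma_sets torus (torus_gen :: (real ^ 'd) set set)"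
    by (auto simp: sets_restrict_space sets_measure_of[OF torus_gen_subset_Pow]
        space_measure_of[OF torus_gen_subset_Pow] Int_commute)
  have "torus_gen \<subseteq> sets (restrict_space borel (torus :: (real ^ 'd) set))"
  proof
    fix A assume "A \<in> (torus_gen :: (real ^ 'd) set set)"
    then obtain \<phi> where "periodic_continuous \<phi>" "A = torus \<inter> {x. 0 < \<phi> x}"
      unfolding torus_gen_def by blast
    moreover from this have "{x. 0 < \<phi> x} \<in> sets borel"
      using borel_measurable_if_periodic_continuous by measurable
    ultimately show "A \<in> sets (restrict_space borel torus)"
      by (auto simp: sets_restrict_space)
  qed
  then show "sigma_sets torus (torus_gen :: (real ^ 'd) set set)
      \<subseteq> sets (restrict_space borel torus)"
    using sets.top[of "restrict_space borel torus"] by (intro sets.sigma_sets_subset') auto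
qed

section \<open>Extension from continuous to bounded Borel functions\<close>

locale young_limit = young_family \<nu> for \<nu> :: "real ^ 'd \<Rightarrow> (real ^ 'd) measure" +
  fixes \<Psi> :: "nat \<Rightarrow> real ^ 'd \<Rightarrow> real ^ 'd"
  assumes measure_preserving: "\<And>k. measure_preserving_bij (\<Psi> k)"
    and weak_conv_continuous:
      "\<And>\<rho>. torus_continuous \<rho> \<Longrightarrow> weak_L2_conv (\<lambda>k. \<rho> \<circ> \<Psi> k) (young_pair \<nu> \<rho>)"
begin

(* Borel rather than Lebesgue measurability: rho is integrated against every nu x. *)
definition young_convergent :: "(real ^ 'd \<Rightarrow> real) \<Rightarrow> bool" where
  "young_convergent \<rho> \<longleftrightarrow> \<rho> \<in> borel_measurable (restrict_space borel torus) \<and>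
     (\<exists>B. \<forall>x\<in>torus. \<bar>\<rho> x\<bar> \<le> B) \<and> weak_L2_conv (\<lambda>k. \<rho> \<circ> \<Psi> k) (young_pair \<nu> \<rho>)"

lemma L2_torus_comp:
  assumes "\<rho> \<in> borel_measurable (restrict_space borel torus)" "\<And>x. x \<in> torus \<Longrightarrow> \<bar>\<rho> x\<bar> \<le> B"
  shows "L2_torus (\<lambda>x. \<rho> (\<Psi> k x))"
proof (rule L2_torus_bounded)
  show "(\<lambda>x. \<rho> (\<Psi> k x)) \<in> borel_measurable torus_measure"
    by (rule measurable_compose[OF measure_preserving_bij_measurable[OF measure_preserving]
          measurable_lebesgue_on_if_borel_on[OF assms(1)]])
  show "AE x in torus_measure. \<bar>\<rho> (\<Psi> k x)\<bar> \<le> B"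
    using measure_preserving_bij_torus[OF measure_preserving] assms(2) by (intro AE_I2) simp
qed

lemma L2_torus_young_pair:
  assumes "\<rho> \<in> borel_measurable (restrict_space borel torus)" "\<And>x. x \<in> torus \<Longrightarrow> \<bar>\<rho> x\<bar> \<le> B"
    and "young_pair \<nu> \<rho> \<in> borel_measurable torus_measure"
  shows "L2_torus (young_pair \<nu> \<rho>)"
  using assms abs_young_pair_le by (intro L2_torus_bounded[where B=B] AE_prob_young) auto

lemma young_convergentI:
  assumes meas: "\<rho> \<in> borel_measurable (restrict_space borel torus)"
    and bound: "\<And>x. x \<in> torus \<Longrightarrow> \<bar>\<rho> x\<bar> \<le> B"
    and meas_pair: "young_pair \<nu> \<rho> \<in> borel_measurable torus_measure"
    and conv: "\<And>g. L2_torus g \<Longrightarrow>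
      (\<lambda>k. \<integral>x. \<rho> (\<Psi> k x) * g x \<partial>torus_measure) \<longlonglongrightarrow> (\<integral>x. young_pair \<nu> \<rho> x * g x \<partial>torus_measure)"
  shows "young_convergent \<rho>"
  unfolding young_convergent_def weak_L2_conv_def
  using meas bound conv L2_torus_comp[OF meas bound] L2_torus_young_pair[OF meas bound meas_pair]
  by (auto simp: comp_def)

lemma young_convergentE:
  assumes "young_convergent \<rho>"
  obtains B where "\<rho> \<in> borel_measurable (restrict_space borel torus)"
    and "\<And>x. x \<in> torus \<Longrightarrow> \<bar>\<rho> x\<bar> \<le> B"
    and "young_pair \<nu> \<rho> \<in> borel_measurable torus_measure"
    and "\<And>g. L2_torus g \<Longrightarrow>
      (\<lambda>k. \<integral>x. \<rho> (\<Psi> k x) * g x \<partial>torus_measure) \<longlonglongrightarrow> (\<integral>x. young_pair \<nu> \<rho> x * g x \<partial>torus_measure)"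
  using assms unfolding young_convergent_def weak_L2_conv_def L2_torus_def comp_def by blast

lemma young_convergent_periodic_continuous:
  assumes "periodic_continuous \<phi>"
  shows "young_convergent \<phi>"
proof -
  obtain B where "\<And>x. x \<in> torus \<Longrightarrow> \<bar>\<phi> x\<bar> \<le> B"
    using bounded_on_torus_if_periodic_continuous[OF assms] by blast
  then show ?thesis
    using weak_conv_continuous[OF torus_continuous_if_periodic_continuous[OF assms]]
      borel_measurable_if_periodic_continuous[OF assms]
    unfolding young_convergent_def by (blast intro: measurable_restrict_space1)
qed

lemma young_convergent_const: "young_convergent (\<lambda>x. c)"
  by (rule young_convergent_periodic_continuous) (simp add: periodic_continuous_def)

lemma young_convergent_lincomb:
  assumes "young_convergent \<rho>1" "young_convergent \<rho>2"
  shows "young_convergent (\<lambda>x. a * \<rho>1 x + b * \<rho>2 x)"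
proof -
  obtain B1 where meas1: "\<rho>1 \<in> borel_measurable (restrict_space borel torus)"
    and bound1: "\<And>x. x \<in> torus \<Longrightarrow> \<bar>\<rho>1 x\<bar> \<le> B1"
    and pair1: "young_pair \<nu> \<rho>1 \<in> borel_measurable torus_measure"
    and conv1: "\<And>g. L2_torus g \<Longrightarrow> (\<lambda>k. \<integral>x. \<rho>1 (\<Psi> k x) * g x \<partial>torus_measure)
      \<longlonglongrightarrow> (\<integral>x. young_pair \<nu> \<rho>1 x * g x \<partial>torus_measure)"
    using young_convergentE[OF assms(1)] by blast
  obtain B2 where meas2: "\<rho>2 \<in> borel_measurable (restrict_space borel torus)"
    and bound2: "\<And>x. x \<in> torus \<Longrightarrow> \<bar>\<rho>2 x\<bar> \<le> B2"
    and pair2: "young_pair \<nu> \<rho>2 \<in> borel_measurable torus_measure"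
    and conv2: "\<And>g. L2_torus g \<Longrightarrow> (\<lambda>k. \<integral>x. \<rho>2 (\<Psi> k x) * g x \<partial>torus_measure)
      \<longlonglongrightarrow> (\<integral>x. young_pair \<nu> \<rho>2 x * g x \<partial>torus_measure)"
    using young_convergentE[OF assms(2)] by blast
  note pair_eq = AE_young_pair_lincomb[OF meas1 bound1 meas2 bound2, of a b]
  show ?thesis
  proof (rule young_convergentI)
    show "(\<lambda>x. a * \<rho>1 x + b * \<rho>2 x) \<in> borel_measurable (restrict_space borel torus)"
      using meas1 meas2 by measurable
    show "\<bar>a * \<rho>1 x + b * \<rho>2 x\<bar> \<le> \<bar>a\<bar> * B1 + \<bar>b\<bar> * B2" if "x \<in> torus" for x
      using abs_triangle_ineq[of "a * \<rho>1 x" "b * \<rho>2 x"]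
        mult_left_mono[OF bound1[OF that], of "\<bar>a\<bar>"] mult_left_mono[OF bound2[OF that], of "\<bar>b\<bar>"]
      by (simp add: abs_mult)
    show pair: "young_pair \<nu> (\<lambda>y. a * \<rho>1 y + b * \<rho>2 y) \<in> borel_measurable torus_measure"
      by (rule borel_measurable_young_pair_lincomb[OF meas1 bound1 meas2 bound2 pair1 pair2])
    fix g :: "real ^ 'd \<Rightarrow> real" assume g: "L2_torus g"
    have "(\<integral>x. young_pair \<nu> (\<lambda>y. a * \<rho>1 y + b * \<rho>2 y) x * g x \<partial>torus_measure)
        = (\<integral>x. (a * young_pair \<nu> \<rho>1 x + b * young_pair \<nu> \<rho>2 x) * g x \<partial>torus_measure)"
      using pair pair1 pair2 g pair_eq unfolding L2_torus_def
      by (intro integral_cong_AE) (auto elim!: AE_mp)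
    then show "(\<lambda>k. \<integral>x. (a * \<rho>1 (\<Psi> k x) + b * \<rho>2 (\<Psi> k x)) * g x \<partial>torus_measure)
        \<longlonglongrightarrow> (\<integral>x. young_pair \<nu> (\<lambda>y. a * \<rho>1 y + b * \<rho>2 y) x * g x \<partial>torus_measure)"
      using conv1[OF g] conv2[OF g]
      by (simp add: integral_lincomb_mult_L2_torus[OF L2_torus_comp[OF meas1 bound1]
            L2_torus_comp[OF meas2 bound2] g]
          integral_lincomb_mult_L2_torus[OF L2_torus_young_pair[OF meas1 bound1 pair1]
            L2_torus_young_pair[OF meas2 bound2 pair2] g] tendsto_add tendsto_mult_left)
  qed
qed

lemma young_convergent_cong:
  assumes conv: "young_convergent \<rho>"
    and meas: "\<rho>' \<in> borel_measurable (restrict_space borel torus)"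
    and eq: "\<And>x. x \<in> torus \<Longrightarrow> \<rho>' x = \<rho> x"
  shows "young_convergent \<rho>'"
proof -
  obtain B where bound: "\<And>x. x \<in> torus \<Longrightarrow> \<bar>\<rho> x\<bar> \<le> B"
    and pair: "young_pair \<nu> \<rho> \<in> borel_measurable torus_measure"
    and lim: "\<And>g. L2_torus g \<Longrightarrow> (\<lambda>k. \<integral>x. \<rho> (\<Psi> k x) * g x \<partial>torus_measure)
      \<longlonglongrightarrow> (\<integral>x. young_pair \<nu> \<rho> x * g x \<partial>torus_measure)"
    using young_convergentE[OF conv] by blast
  have pair_eq: "young_pair \<nu> \<rho>' x = young_pair \<nu> \<rho> x" if "x \<in> torus" for x
    using eq that by (intro young_pair_cong) auto
  have comp_eq: "\<rho>' (\<Psi> k x) = \<rho> (\<Psi> k x)" if "x \<in> torus" for k x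
    using eq measure_preserving_bij_torus[OF measure_preserving that] by blast
  show ?thesis
  proof (rule young_convergentI[where B=B])
    show "young_pair \<nu> \<rho>' \<in> borel_measurable torus_measure"
      using pair pair_eq by (subst measurable_cong[where g="young_pair \<nu> \<rho>"]) auto
    fix g :: "real ^ 'd \<Rightarrow> real" assume "L2_torus g"
    moreover have "(\<integral>x. \<rho>' (\<Psi> k x) * g x \<partial>torus_measure)
        = (\<integral>x. \<rho> (\<Psi> k x) * g x \<partial>torus_measure)" for k
      by (intro Bochner_Integration.integral_cong) (simp_all add: comp_eq)
    moreover have "(\<integral>x. young_pair \<nu> \<rho>' x * g x \<partial>torus_measure)
        = (\<integral>x. young_pair \<nu> \<rho> x * g x \<partial>torus_measure)"
      by (intro Bochner_Integration.integral_cong) (simp_all add: pair_eq)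
    ultimately show "(\<lambda>k. \<integral>x. \<rho>' (\<Psi> k x) * g x \<partial>torus_measure)
        \<longlonglongrightarrow> (\<integral>x. young_pair \<nu> \<rho>' x * g x \<partial>torus_measure)"
      using lim by simp
  qed (use meas bound eq in auto)
qed

lemma young_convergent_sum:
  assumes "finite I" "\<And>i. i \<in> I \<Longrightarrow> young_convergent (f i)"
  shows "young_convergent (\<lambda>x. \<Sum>i\<in>I. f i x)"
  using assms
proof (induction I rule: finite_induct)
  case empty
  then show ?case using young_convergent_const[of 0] by simp
next
  case (insert i I)
  then have "young_convergent (\<lambda>x. 1 * f i x + 1 * (\<Sum>i\<in>I. f i x))"
    by (intro young_convergent_lincomb) auto
  with insert show ?case by simp
qed

lemma young_convergent_limit:
  assumes conv: "\<And>n. young_convergent (\<rho>s n)"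
    and meas: "\<rho> \<in> borel_measurable (restrict_space borel torus)"
    and bound: "\<And>n x. x \<in> torus \<Longrightarrow> \<bar>\<rho>s n x\<bar> \<le> B"
    and lim: "\<And>x. x \<in> torus \<Longrightarrow> (\<lambda>n. \<rho>s n x) \<longlonglongrightarrow> \<rho> x"
  shows "young_convergent \<rho>"
proof -
  have meas_s: "\<rho>s n \<in> borel_measurable (restrict_space borel torus)"
    and pair_s: "young_pair \<nu> (\<rho>s n) \<in> borel_measurable torus_measure"
    and lim_s: "\<And>g. L2_torus g \<Longrightarrow> (\<lambda>k. \<integral>x. \<rho>s n (\<Psi> k x) * g x \<partial>torus_measure)
      \<longlonglongrightarrow> (\<integral>x. young_pair \<nu> (\<rho>s n) x * g x \<partial>torus_measure)" for n
    using young_convergentE[OF conv] by blast+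
  have bound_lim: "\<bar>\<rho> x\<bar> \<le> B" if "x \<in> torus" for x
    using bound that by (intro LIMSEQ_le_const2[OF tendsto_rabs[OF lim[OF that]]]) auto
  show ?thesis
  proof (rule young_convergentI[OF meas bound_lim
        borel_measurable_young_pair_limit[OF meas_s meas bound lim pair_s]])
    fix g :: "real ^ 'd \<Rightarrow> real" assume g: "L2_torus g"
    show "(\<lambda>k. \<integral>x. \<rho> (\<Psi> k x) * g x \<partial>torus_measure)
        \<longlonglongrightarrow> (\<integral>x. young_pair \<nu> \<rho> x * g x \<partial>torus_measure)"
    proof (rule swap_uniform_limit')
      show "uniform_limit UNIV (\<lambda>n k. \<integral>x. \<rho>s n (\<Psi> k x) * g x \<partial>torus_measure)
          (\<lambda>k. \<integral>x. \<rho> (\<Psi> k x) * g x \<partial>torus_measure) sequentially"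
        using meas_s meas bound bound_lim lim g
        by (intro uniform_limit_integral_comp_mult[OF measure_preserving]
            measurable_lebesgue_on_if_borel_on)
    qed (use lim_s[OF g] integral_young_pair_mult_tendsto[OF meas_s meas bound lim pair_s g]
        in auto)
  qed
qed

lemma young_convergent_indicator_positive:
  assumes \<phi>: "periodic_continuous \<phi>"
  shows "young_convergent (indicator {x \<in> torus. 0 < \<phi> x})"
proof (rule young_convergent_limit)
  define \<psi> where "\<psi> n x = min 1 (real n * max 0 (\<phi> x))" for n x
  show "young_convergent (\<psi> n)" for n
    unfolding \<psi>_def
    by (intro young_convergent_periodic_continuous periodic_continuous_compose[OF _ \<phi>]
        continuous_intros)
  show "\<bar>\<psi> n x\<bar> \<le> 1" for n x
    by (simp add: \<psi>_def)
  show "indicator {x \<in> torus. 0 < \<phi> x} \<in> borel_measurable (restrict_space borel torus)"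
    using borel_measurable_if_periodic_continuous[OF \<phi>]
    by (intro measurable_restrict_space1) measurable
  fix x :: "real ^ 'd" assume "x \<in> torus"
  show "(\<lambda>n. \<psi> n x) \<longlonglongrightarrow> indicator {x \<in> torus. 0 < \<phi> x} x"
  proof (cases "0 < \<phi> x")
    case True
    have "\<forall>\<^sub>F n in sequentially. \<psi> n x = 1"
    proof -
      obtain N :: nat where "1 / \<phi> x < N" using reals_Archimedean2 by blast
      then have "1 < N * \<phi> x" using True by (simp add: field_simps)
      moreover have "N * \<phi> x \<le> n * \<phi> x" if "N \<le> n" for n
        using True that by (intro mult_right_mono) auto
      ultimately have "1 < n * \<phi> x" if "N \<le> n" for n
        using that by fastforce
      then have "\<psi> n x = 1" if "N \<le> n" for n
        using True that by (simp add: \<psi>_def)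
      then show ?thesis by (auto simp: eventually_sequentially)
    qed
    then show ?thesis using True \<open>x \<in> torus\<close> by (simp add: tendsto_eventually)
  next
    case False
    then show ?thesis by (simp add: \<psi>_def)
  qed
qed

lemma young_convergent_indicator_Diff:
  assumes "young_convergent (indicator A)" "torus - A \<in> sets (restrict_space borel torus)"
  shows "young_convergent (indicator (torus - A))"
proof (rule young_convergent_cong)
  show "young_convergent (\<lambda>x. 1 * 1 + (- 1) * indicator A x)"
    by (intro young_convergent_lincomb young_convergent_const assms(1))
qed (use assms(2) in \<open>auto simp: indicator_def\<close>)

lemma young_convergent_indicator_disjoint_UN:
  fixes A :: "nat \<Rightarrow> (real ^ 'd) set"
  assumes "disjoint_family A" "\<And>i. young_convergent (indicator (A i))"
    and "(\<Union>i. A i) \<in> sets (restrict_space borel torus)"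
  shows "young_convergent (indicator (\<Union>i. A i))"
proof (rule young_convergent_limit)
  have sums: "(\<lambda>i. indicator (A i) x) sums (indicator (\<Union>i. A i) x :: real)" for x
    using assms(1) by (intro indicator_sums) (auto simp: disjoint_family_on_def)
  then show "(\<lambda>n. \<Sum>i<n. indicator (A i) x) \<longlonglongrightarrow> (indicator (\<Union>i. A i) x :: real)" for x
    unfolding sums_def .
  show "\<bar>\<Sum>i<n. indicator (A i) x\<bar> \<le> (1 :: real)" for n x
  proof -
    have "(\<Sum>i<n. indicator (A i) x) \<le> (\<Sum>i. indicator (A i) x :: real)"
      by (rule sum_le_suminf[OF sums_summable[OF sums]]) auto
    also have "\<dots> = indicator (\<Union>i. A i) x"
      by (rule sums_unique[OF sums, symmetric])
    also have "\<dots> \<le> 1"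
      by (rule indicator_le_1)
    finally show ?thesis
      by (simp add: sum_nonneg)
  qed
  show "young_convergent (\<lambda>x. \<Sum>i<n. indicator (A i) x)" for n
    by (intro young_convergent_sum assms(2)) auto
qed (use assms(3) in simp)

lemma young_convergent_indicator:
  assumes "A \<in> sets (restrict_space borel torus)"
  shows "young_convergent (indicator A)"
proof -
  have "A \<in> sigma_sets torus torus_gen"
    using assms sets_restrict_space_borel_torus by blast
  with Int_stable_torus_gen torus_gen_subset_Pow show ?thesis
  proof (induction rule: sigma_sets_induct_disjoint)
    case (basic A)
    then show ?case
      unfolding torus_gen_def by (auto intro: young_convergent_indicator_positive)
  next
    case empty
    then show ?case using young_convergent_const[of 0] by simp
  next
    case (compl A)
    then show ?case
      using sets_restrict_space_borel_torus
      by (intro young_convergent_indicator_Diff) (auto intro: sigma_sets.Compl)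
  next
    case (union A)
    then show ?case
      using sets_restrict_space_borel_torus
      by (intro young_convergent_indicator_disjoint_UN) (auto intro: sigma_sets.Union)
  qed
qed

lemma young_convergent_nonneg:
  assumes meas: "\<rho> \<in> borel_measurable (restrict_space borel torus)"
    and nonneg: "\<And>x. 0 \<le> \<rho> x" and bound: "\<And>x. x \<in> torus \<Longrightarrow> \<rho> x \<le> B"
  shows "young_convergent \<rho>"
  using meas nonneg bound
proof (induction \<rho> arbitrary: B rule: borel_measurable_induct_real)
  (* summands and increasing approximants of a nonnegative function inherit its bound *)
  case (set A)
  then show ?case by (simp add: young_convergent_indicator)
next
  case (mult u c)
  show ?case
  proof (cases "c = 0")
    case False
    with mult.hyps(1) have "u x \<le> B / c" if "x \<in> torus" for x
      using mult.prems[OF that] by (simp add: pos_le_divide_eq mult.commute)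
    from young_convergent_lincomb[OF mult.IH[OF this] mult.IH[OF this], of c 0] show ?thesis
      by simp
  qed (use young_convergent_const[of 0] in simp)
next
  case (add u v)
  have "u x \<le> B" "v x \<le> B" if "x \<in> torus" for x
    using add.hyps(2,4)[of x] add.prems[OF that] by linarith+
  from young_convergent_lincomb[OF add.IH(2)[OF this(2)] add.IH(1)[OF this(1)], of 1 1]
  show ?case
    by simp
next
  case (seq U)
  have lim_U: "(\<lambda>i. U i x) \<longlonglongrightarrow> \<rho> x" if "x \<in> torus" for x
    using that by (intro seq.hyps(4)) (simp add: space_restrict_space)
  have bound_U: "U i x \<le> B" if "x \<in> torus" for i x
    using incseq_le[OF _ lim_U[OF that], of i] seq.hyps(3) seq.prems[OF that]
    by (auto simp: incseq_def le_fun_def)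
  show ?case
  proof (rule young_convergent_limit[OF _ _ _ lim_U])
    show "young_convergent (U i)" for i
      using bound_U by (rule seq.IH)
    show "\<rho> \<in> borel_measurable (restrict_space borel torus)"
      using seq.hyps(4,1) by (rule borel_measurable_LIMSEQ_real)
    show "\<bar>U i x\<bar> \<le> B" if "x \<in> torus" for i x
      using seq.hyps(2)[of i x] bound_U[OF that] by simp
  qed
qed

lemma young_convergent_bounded:
  assumes meas: "\<rho> \<in> borel_measurable (restrict_space borel torus)"
    and bound: "\<And>x. x \<in> torus \<Longrightarrow> \<bar>\<rho> x\<bar> \<le> B"
  shows "young_convergent \<rho>"
proof -
  have "young_convergent (\<lambda>x. max (\<rho> x) 0)" "young_convergent (\<lambda>x. max (- \<rho> x) 0)"
    using meas order_trans[OF abs_ge_zero bound] bound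
    by (auto intro!: young_convergent_nonneg[where B=B] simp: abs_le_iff)
  moreover have "(\<lambda>x. 1 * max (\<rho> x) 0 + (- 1) * max (- \<rho> x) 0) = \<rho>"
    by (auto simp: fun_eq_iff max_def)
  ultimately show ?thesis
    using young_convergent_lincomb[of "\<lambda>x. max (\<rho> x) 0" "\<lambda>x. max (- \<rho> x) 0" 1 "-1"] by simp
qed

end

theorem theorem3p3:
  fixes \<Psi> :: "nat \<Rightarrow> real ^ 'd \<Rightarrow> real ^ 'd"
    and j :: "nat \<Rightarrow> nat"
    and \<nu> :: "real ^ 'd \<Rightarrow> (real ^ 'd) measure"
  assumes d2: "CARD('d) \<ge> 2"
    and mpb: "\<And>n. measure_preserving_bij (\<Psi> n)"
    and subseq: "strict_mono j"
    and nu_sets: "\<And>x. x \<in> torus \<Longrightarrow> sets (\<nu> x) = sets (restrict_space borel torus)"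
    and nu_prob: "AE x in torus_measure. prob_space (\<nu> x)"
    and conv_cont: "\<And>\<rho>. torus_continuous \<rho> \<Longrightarrow>
                      weak_L2_conv (\<lambda>k. \<rho> \<circ> \<Psi> (j k)) (young_pair \<nu> \<rho>)"
  shows "\<forall>\<rho>. \<rho> \<in> borel_measurable borel \<longrightarrow> (\<exists>B. \<forall>x\<in>torus. \<bar>\<rho> x\<bar> \<le> B) \<longrightarrow>
           weak_L2_conv (\<lambda>k. \<rho> \<circ> \<Psi> (j k)) (young_pair \<nu> \<rho>)"
proof (intro allI impI)
  fix \<rho> :: "real ^ 'd \<Rightarrow> real"
  assume meas: "\<rho> \<in> borel_measurable borel" and "\<exists>B. \<forall>x\<in>torus. \<bar>\<rho> x\<bar> \<le> B"
  then obtain B where bound: "\<forall>x\<in>torus. \<bar>\<rho> x\<bar> \<le> B" by blast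
  interpret young_limit \<nu> "\<lambda>k. \<Psi> (j k)"
    using nu_sets nu_prob mpb conv_cont by unfold_locales auto
  have "young_convergent \<rho>"
    using measurable_restrict_space1[OF meas] bound by (intro young_convergent_bounded) auto
  then show "weak_L2_conv (\<lambda>k. \<rho> \<circ> \<Psi> (j k)) (young_pair \<nu> \<rho>)"
    unfolding young_convergent_def by blast
qed

end
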